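(* Under the assumptions of the explicit-formulae proposition (piecewise linear concave non-positive increasing $v$ on grid $x_1<\dots<x_N$, $-\infty$ below $x_1$ and constant above $x_N$; $u$ concave increasing with $u^\dagger$ continuous on $(0,\infty)$ and $\lim_{p\to0}u^\dagger(p)=\infty$; $s\in(0,1)$), $\lim_{\eta\to\infty}X^\eta=\gamma_{\min}+s^Ce^{-r\delta t}x_1$.
   Context: $\gamma_{\min}=\inf\{x:u(x)>-\infty\}$. $\Phi$ is the standard normal distribution function, $M=|\mu-r|\sqrt{\delta t}/\sigma$, $Q(x)=\Phi(M+\Phi^{-1}(x))$, $q^A_{BS}=Q'$. For concave increasing $g$, $g^\dagger(p)=\inf\{x:p\in\partial g(x)\}$, $\partial g$ the superdifferential. $C\in\{0,1\}$. For $\eta>0$: $f^\eta(x)=v^\dagger(\eta s^{C-1}e^{-r\delta t}q^A_{BS}(x))$, $\gamma^\eta=u^\dagger\big(-\frac{\eta}{\delta t}\big(-1+s\int_0^1(1+v(f^\eta(x)))\mathrm dx\big)^{-1}\big)$, $X^\eta=\gamma^\eta+s^C\int_0^1e^{-r\delta t}q^A_{BS}(x)f^\eta(x)\mathrm dx$. *)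

theory Defs
  imports "HOL-Probability.Probability"
begin

definition Phi :: "real \<Rightarrow> real" where
  "Phi x = integral {..x} std_normal_density"

definition Phi_inv :: "real \<Rightarrow> real" where
  "Phi_inv y = (THE z. Phi z = y)"

definition Mpar :: "real \<Rightarrow> real \<Rightarrow> real \<Rightarrow> real \<Rightarrow> real" where
  "Mpar \<mu> r \<sigma> dt = \<bar>\<mu> - r\<bar> * sqrt dt / \<sigma>"

definition Qfun :: "real \<Rightarrow> real \<Rightarrow> real" where
  "Qfun M x = Phi (M + Phi_inv x)"

definition qBS :: "real \<Rightarrow> real \<Rightarrow> real" where
  "qBS M x = deriv (Qfun M) x"

definition econcave :: "(real \<Rightarrow> ereal) \<Rightarrow> bool" where
  "econcave g \<longleftrightarrow> (\<forall>x y t. 0 \<le> t \<longrightarrow> t \<le> 1 \<longrightarrow>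
      ereal t * g x + ereal (1 - t) * g y \<le> g (t * x + (1 - t) * y))"

definition superdiff :: "(real \<Rightarrow> ereal) \<Rightarrow> real \<Rightarrow> real set" where
  "superdiff g x = {p. \<bar>g x\<bar> \<noteq> \<infinity> \<and> (\<forall>y. g y \<le> g x + ereal (p * (y - x)))}"

text \<open>g^dagger(p) = inf {x. p in superdiff g x}, with inf of the empty set = +oo.\<close>
definition gdagger :: "(real \<Rightarrow> ereal) \<Rightarrow> real \<Rightarrow> ereal" where
  "gdagger g p = Inf (ereal ` {x. p \<in> superdiff g x})"

definition gamma_min :: "(real \<Rightarrow> ereal) \<Rightarrow> ereal" where
  "gamma_min u = Inf (ereal ` {x. u x > -\<infinity>})"

definition f_eta :: "(real \<Rightarrow> ereal) \<Rightarrow> real \<Rightarrow> nat \<Rightarrow> real \<Rightarrow> real \<Rightarrow> real \<Rightarrow> real \<Rightarrow> real \<Rightarrow> real" where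
  "f_eta v s C r dt M \<eta> x =
     real_of_ereal (gdagger v (\<eta> * s powr (real C - 1) * exp (- r * dt) * qBS M x))"

definition gamma_eta :: "(real \<Rightarrow> ereal) \<Rightarrow> (real \<Rightarrow> ereal) \<Rightarrow> real \<Rightarrow> nat \<Rightarrow> real \<Rightarrow> real \<Rightarrow> real \<Rightarrow> real \<Rightarrow> ereal" where
  "gamma_eta u v s C r dt M \<eta> =
     gdagger u (- (\<eta> / dt) * inverse (-1 + s * integral {0..1}
        (\<lambda>x. 1 + real_of_ereal (v (f_eta v s C r dt M \<eta> x)))))"

definition X_eta :: "(real \<Rightarrow> ereal) \<Rightarrow> (real \<Rightarrow> ereal) \<Rightarrow> real \<Rightarrow> nat \<Rightarrow> real \<Rightarrow> real \<Rightarrow> real \<Rightarrow> real \<Rightarrow> ereal" where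
  "X_eta u v s C r dt M \<eta> =
     gamma_eta u v s C r dt M \<eta> +
     ereal (s ^ C * integral {0..1} (\<lambda>x. exp (- r * dt) * qBS M x * f_eta v s C r dt M \<eta> x))"

end

theory Submission
  imports Defs
begin

text \<open>For large \<open>\<eta>\<close> the argument of \<open>v\<^sup>\<dagger>\<close> in \<open>f\<^sup>\<eta>(x)\<close> is large for every
  \<open>x \<in> (0,1)\<close>, because \<open>q\<^sup>A\<^sub>B\<^sub>S > 0\<close> there. Once a slope exceeds all chord slopes of the
  piecewise linear \<open>v\<close> starting at \<open>x\<^sub>1\<close>, its smallest supergradient point is \<open>x\<^sub>1\<close>; since
  \<open>v\<^sup>\<dagger>\<close> takes values in \<open>[x\<^sub>1, x\<^sub>N]\<close>, dominated convergence gives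
  \<open>\<integral> q\<^sup>A\<^sub>B\<^sub>S f\<^sup>\<eta> \<rightarrow> x\<^sub>1 \<integral> q\<^sup>A\<^sub>B\<^sub>S = x\<^sub>1\<close>, where \<open>\<integral> q\<^sup>A\<^sub>B\<^sub>S = 1\<close> because \<open>Q\<close> increases
  from 0 to 1 on \<open>(0,1)\<close>.

  In \<open>\<gamma>\<^sup>\<eta>\<close> the integral of \<open>1 + v(f\<^sup>\<eta>)\<close> stays in a fixed bounded range, so the argument of
  \<open>u\<^sup>\<dagger>\<close> grows linearly in \<open>\<eta>\<close>. Finally \<open>u\<^sup>\<dagger>(p) \<rightarrow> \<gamma>\<^sub>m\<^sub>i\<^sub>n\<close> as \<open>p \<rightarrow> \<infinity>\<close>: a supergradient
  point of a large slope \<open>p\<close> lies within \<open>O(1/p)\<close> to the right of any point where \<open>u\<close> is finite.\<close>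

section \<open>The standard normal distribution\<close>

abbreviation phi :: "real \<Rightarrow> real" where "phi \<equiv> std_normal_density"

lemma integrable_std_normal_density: "integrable lborel phi"
  and integral_std_normal_density: "integral\<^sup>L lborel phi = 1"
  using std_normal_moment_even[of 0]
  by (auto dest: has_bochner_integral_integrable has_bochner_integral_integral_eq)

lemma std_normal_density_pos: "0 < phi x"
  by (simp add: normal_density_pos)

lemma continuous_on_std_normal_density: "continuous_on A phi"
  unfolding std_normal_density_def by (intro continuous_intros) auto

lemma Phi_eq_set_integral: "Phi x = (LINT y : {..x} | lborel. phi y)"
  and Phi_has_integral: "(phi has_integral Phi x) {..x}"
proof -
  have "set_integrable lborel {..x} phi"
    unfolding set_integrable_def using integrable_std_normal_density
    by (intro integrable_mult_indicator) auto
  from set_borel_integral_eq_integral[OF this]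
  show "Phi x = (LINT y : {..x} | lborel. phi y)" "(phi has_integral Phi x) {..x}"
    unfolding Phi_def by (auto simp: integrable_integral)
qed

lemma Phi_add_integral: "x \<le> y \<Longrightarrow> Phi y = Phi x + integral {x..y} phi"
proof -
  assume "x \<le> y"
  then have "{..x} \<union> {x..y} = {..y}" by auto
  have "(phi has_integral integral {x..y} phi) {x..y}"
    using integrable_continuous_interval[OF continuous_on_std_normal_density]
    by (simp add: integrable_integral)
  then have "(phi has_integral (Phi x + integral {x..y} phi)) ({..x} \<union> {x..y})"
    by (rule has_integral_Un[OF Phi_has_integral])
       (auto simp: negligible_sing[of x] intro: negligible_subset[of "{x}"])
  with \<open>{..x} \<union> {x..y} = {..y}\<close> show ?thesis
    using Phi_has_integral[of y] has_integral_unique by metis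
qed

lemma Phi_has_real_derivative: "(Phi has_real_derivative phi x) (at x)"
proof -
  have "((\<lambda>t. integral {x-1..t} phi) has_real_derivative phi x) (at x within {x-1..x+1})"
    by (rule integral_has_real_derivative[OF continuous_on_std_normal_density]) auto
  then have "((\<lambda>t. Phi (x-1) + integral {x-1..t} phi) has_real_derivative phi x) (at x)"
    using at_within_Icc_at[of "x-1" x "x+1"] by (auto intro!: derivative_eq_intros)
  then show ?thesis
  proof (rule has_field_derivative_transform_within_open[where S="{x-1<..}"])
    show "Phi (x - 1) + integral {x - 1..t} phi = Phi t" if "t \<in> {x-1<..}" for t
      using that Phi_add_integral[of "x - 1" t] by simp
  qed auto
qed

lemma isCont_Phi: "isCont Phi x"
  by (rule DERIV_isCont[OF Phi_has_real_derivative])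

lemma strict_mono_Phi: "strict_mono Phi"
proof (rule strict_monoI)
  show "Phi x < Phi y" if "x < y" for x y :: real
    using that by (rule DERIV_pos_imp_increasing)
      (use Phi_has_real_derivative std_normal_density_pos in blast)
qed

lemma Phi_tendsto_at_top: "(Phi \<longlongrightarrow> 1) at_top"
proof -
  have "((\<lambda>t. integral\<^sup>L lborel (\<lambda>y. indicator {..t} y *\<^sub>R phi y)) \<longlongrightarrow> integral\<^sup>L lborel phi) at_top"
  proof (rule integral_dominated_convergence_at_top[where w=phi])
    have "\<forall>\<^sub>F t in at_top. indicator {..t} y *\<^sub>R phi y = phi y" for y :: real
      using eventually_ge_at_top[of y] by eventually_elim auto
    then show "AE y in lborel. ((\<lambda>t. indicator {..t} y *\<^sub>R phi y) \<longlongrightarrow> phi y) at_top"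
      by (intro AE_I2 tendsto_eventually)
    show "\<forall>\<^sub>F t in at_top. AE y in lborel. norm (indicator {..t} y *\<^sub>R phi y) \<le> phi y"
      by (auto simp: indicator_def)
  qed (auto simp: integrable_std_normal_density)
  then show ?thesis
    by (simp add: Phi_eq_set_integral[abs_def] set_lebesgue_integral_def integral_std_normal_density)
qed

lemma Phi_tendsto_at_bot: "(Phi \<longlongrightarrow> 0) at_bot"
proof -
  have "((\<lambda>t. integral\<^sup>L lborel (\<lambda>y. indicator {..-t} y *\<^sub>R phi y))
          \<longlongrightarrow> integral\<^sup>L lborel (\<lambda>y::real. 0::real)) at_top"
  proof (rule integral_dominated_convergence_at_top[where w=phi])
    have "\<forall>\<^sub>F t in at_top. indicator {..-t} y *\<^sub>R phi y = 0" for y :: real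
      using eventually_gt_at_top[of "-y"] by eventually_elim (auto simp: indicator_def)
    then show "AE y in lborel. ((\<lambda>t. indicator {..-t} y *\<^sub>R phi y) \<longlongrightarrow> 0) at_top"
      by (intro AE_I2 tendsto_eventually)
    show "\<forall>\<^sub>F t in at_top. AE y in lborel. norm (indicator {..-t} y *\<^sub>R phi y) \<le> phi y"
      by (auto simp: indicator_def)
  qed (auto simp: integrable_std_normal_density)
  then have "((\<lambda>t. Phi (-t)) \<longlongrightarrow> 0) at_top"
    by (simp add: Phi_eq_set_integral set_lebesgue_integral_def)
  then show ?thesis by (simp add: filterlim_at_bot_mirror)
qed

lemma Phi_bounds: "0 < Phi x" "Phi x < 1"
proof -
  have "0 \<le> Phi (x - 1)"
    by (rule tendsto_upperbound[OF Phi_tendsto_at_bot])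
       (use strict_mono_Phi in \<open>auto simp: eventually_at_bot_linorder strict_mono_less_eq\<close>)
  then show "0 < Phi x" using strict_monoD[OF strict_mono_Phi, of "x - 1" x] by simp
  have "Phi (x + 1) \<le> 1"
    by (rule tendsto_lowerbound[OF Phi_tendsto_at_top])
       (use strict_mono_Phi in \<open>auto simp: eventually_at_top_linorder strict_mono_less_eq\<close>)
  then show "Phi x < 1" using strict_monoD[OF strict_mono_Phi, of x "x + 1"] by simp
qed

lemma Phi_surj:
  assumes "0 < y" "y < 1" shows "\<exists>z. Phi z = y"
proof -
  obtain a where a: "Phi a < y"
    using order_tendstoD(2)[OF Phi_tendsto_at_bot assms(1)] by (auto simp: eventually_at_bot_linorder)
  obtain b where b: "y < Phi b"
    using order_tendstoD(1)[OF Phi_tendsto_at_top assms(2)] by (auto simp: eventually_at_top_linorder)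
  from a b have "a < b" using strict_mono_less[OF strict_mono_Phi, of a b] by simp
  then show ?thesis using IVT[of Phi a y b] a b isCont_Phi by auto
qed

lemma Phi_inv_Phi: "Phi_inv (Phi z) = z"
  unfolding Phi_inv_def by (rule the_equality) (auto simp: strict_mono_eq[OF strict_mono_Phi])

lemma Phi_Phi_inv: "0 < y \<Longrightarrow> y < 1 \<Longrightarrow> Phi (Phi_inv y) = y"
  using Phi_surj Phi_inv_Phi by metis

lemma isCont_Phi_inv:
  assumes "0 < y" "y < 1" shows "isCont Phi_inv y"
proof -
  have "isCont Phi_inv (Phi (Phi_inv y))"
    by (rule isCont_inverse_function2[of "Phi_inv y - 1" _ "Phi_inv y + 1"])
       (auto simp: Phi_inv_Phi isCont_Phi)
  then show ?thesis using Phi_Phi_inv assms by simp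
qed

lemma Phi_inv_has_real_derivative:
  assumes "0 < y" "y < 1"
  shows "(Phi_inv has_real_derivative inverse (phi (Phi_inv y))) (at y)"
  by (rule DERIV_inverse_function[OF Phi_has_real_derivative _ assms, of Phi_inv])
     (use std_normal_density_pos[of "Phi_inv y"] Phi_Phi_inv isCont_Phi_inv assms in auto)

lemma Phi_inv_tendsto_at_bot: "filterlim Phi_inv at_bot (at_right 0)"
  unfolding filterlim_at_bot_dense
proof
  fix z :: real
  have "\<forall>\<^sub>F y in at_right 0. y \<in> {0<..<min 1 (Phi z)}"
    using Phi_bounds[of z] by (intro eventually_at_right_real) auto
  then show "\<forall>\<^sub>F y in at_right 0. Phi_inv y < z"
  proof eventually_elim
    case (elim y)
    then have "Phi (Phi_inv y) < Phi z" by (simp add: Phi_Phi_inv)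
    then show ?case by (simp add: strict_mono_less[OF strict_mono_Phi])
  qed
qed

lemma Phi_inv_tendsto_at_top: "filterlim Phi_inv at_top (at_left 1)"
  unfolding filterlim_at_top_dense
proof
  fix z :: real
  have "\<forall>\<^sub>F y in at_left 1. y \<in> {max 0 (Phi z)<..<1}"
    using Phi_bounds[of z] by (intro eventually_at_left_real) auto
  then show "\<forall>\<^sub>F y in at_left 1. z < Phi_inv y"
  proof eventually_elim
    case (elim y)
    then have "Phi z < Phi (Phi_inv y)" by (simp add: Phi_Phi_inv)
    then show ?case by (simp add: strict_mono_less[OF strict_mono_Phi])
  qed
qed

definition q_normal :: "real \<Rightarrow> real \<Rightarrow> real" where
  "q_normal M y = phi (M + Phi_inv y) / phi (Phi_inv y)"

lemma Qfun_has_real_derivative: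
  assumes "0 < y" "y < 1"
  shows "(Qfun M has_real_derivative q_normal M y) (at y)"
proof -
  have "((\<lambda>y. M + Phi_inv y) has_real_derivative 0 + inverse (phi (Phi_inv y))) (at y)"
    by (rule DERIV_add[OF DERIV_const Phi_inv_has_real_derivative[OF assms]])
  from DERIV_chain2[OF Phi_has_real_derivative this]
  show ?thesis by (simp add: Qfun_def[abs_def] q_normal_def divide_inverse)
qed

lemma qBS_eq_q_normal: "0 < y \<Longrightarrow> y < 1 \<Longrightarrow> qBS M y = q_normal M y"
  unfolding qBS_def using Qfun_has_real_derivative DERIV_imp_deriv by blast

lemma q_normal_pos: "0 < q_normal M y"
  unfolding q_normal_def using std_normal_density_pos by simp

lemma isCont_q_normal: "0 < y \<Longrightarrow> y < 1 \<Longrightarrow> isCont (q_normal M) y"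
  unfolding q_normal_def std_normal_density_def
  by (intro continuous_intros isCont_Phi_inv) (auto simp: std_normal_density_pos)

lemma Qfun_tendsto_0: "(Qfun M \<longlongrightarrow> 0) (at_right 0)"
  unfolding Qfun_def[abs_def]
  by (rule filterlim_compose[OF Phi_tendsto_at_bot])
     (use filterlim_tendsto_add_at_bot_iff[OF tendsto_const] Phi_inv_tendsto_at_bot in blast)

lemma Qfun_tendsto_1: "(Qfun M \<longlongrightarrow> 1) (at_left 1)"
  unfolding Qfun_def[abs_def]
  by (rule filterlim_compose[OF Phi_tendsto_at_top])
     (rule filterlim_tendsto_add_at_top[OF tendsto_const Phi_inv_tendsto_at_top])

lemma set_integrable_q_normal: "set_integrable lborel {0<..<1} (q_normal M)"
  and set_integral_q_normal: "(LINT y : {0<..<1} | lborel. q_normal M y) = 1"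
proof -
  have "set_integrable lborel (einterval (ereal 0) (ereal 1)) (q_normal M)
      \<and> (LBINT y=ereal 0..ereal 1. q_normal M y) = 1 - 0"
    by (intro conjI interval_integral_FTC_nonneg[where F="Qfun M" and A=0 and B=1])
       (auto simp: Qfun_has_real_derivative isCont_q_normal less_imp_le[OF q_normal_pos]
          Qfun_tendsto_0 Qfun_tendsto_1 ereal_tendsto_simps1)
  then show "set_integrable lborel {0<..<1} (q_normal M)"
    "(LINT y : {0<..<1} | lborel. q_normal M y) = 1"
    by (simp_all add: interval_lebesgue_integral_le_eq)
qed

section \<open>Superdifferentials\<close>

lemma superdiff_finite_value: "p \<in> superdiff g x \<Longrightarrow> \<exists>c. g x = ereal c"
  unfolding superdiff_def by (cases "g x") auto

lemma superdiffD: "p \<in> superdiff g x \<Longrightarrow> g y \<le> g x + ereal (p * (y - x))"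
  unfolding superdiff_def by auto

lemma superdiff_antimono:
  assumes "p \<in> superdiff g x" "p' \<in> superdiff g x'" "p < p'"
  shows "x' \<le> x"
proof -
  obtain c c' where c: "g x = ereal c" and c': "g x' = ereal c'"
    using superdiff_finite_value assms(1,2) by metis
  have "c' \<le> c + p * (x' - x)" "c \<le> c' + p' * (x - x')"
    using superdiffD[OF assms(1), of x'] superdiffD[OF assms(2), of x] c c' by simp_all
  then have "0 \<le> (p - p') * (x' - x)" by (simp add: algebra_simps)
  with \<open>p < p'\<close> show ?thesis by (simp add: zero_le_mult_iff)
qed

lemma gdagger_le: "p \<in> superdiff g x \<Longrightarrow> gdagger g p \<le> ereal x"
  unfolding gdagger_def by (rule Inf_lower) simp

lemma ex_superdiff_if_gdagger_finite: "gdagger g p \<noteq> \<infinity> \<Longrightarrow> \<exists>x. p \<in> superdiff g x"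
  unfolding gdagger_def by (metis (no_types, lifting) Collect_empty_eq Inf_empty image_empty top_ereal_def)

lemma gdagger_antimono:
  assumes "p < p'" "p' \<in> superdiff g x'"
  shows "gdagger g p' \<le> gdagger g p"
  unfolding gdagger_def
proof (rule Inf_greatest)
  fix z assume "z \<in> ereal ` {x. p \<in> superdiff g x}"
  then obtain x where "z = ereal x" "p \<in> superdiff g x" by auto
  then show "Inf (ereal ` {x. p' \<in> superdiff g x}) \<le> z"
    using superdiff_antimono[OF _ assms(2,1)] assms(2) by (auto intro!: Inf_lower2)
qed

lemma gamma_min_le_gdagger: "gamma_min g \<le> gdagger g p"
  unfolding gdagger_def gamma_min_def
  by (rule Inf_superset_mono) (auto simp: superdiff_def)

lemma superdiff_point_le:
  assumes p: "p \<in> superdiff g x" and q: "q \<in> superdiff g x'" "0 \<le> q" "q < p"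
    and c: "g x' = ereal c" and d: "g x0 = ereal d"
  shows "x \<le> x0 + (c - d) / p"
proof -
  obtain e where e: "g x = ereal e" using superdiff_finite_value[OF p] by blast
  have "x \<le> x'" using superdiff_antimono[OF q(1) p q(3)] .
  then have "e \<le> c" using superdiffD[OF q(1), of x] q(2) c e mult_nonneg_nonpos[of q "x - x'"] by simp
  moreover have "d \<le> e + p * (x0 - x)" using superdiffD[OF p, of x0] d e by simp
  ultimately have "(x - x0) * p \<le> c - d" by (simp add: algebra_simps)
  moreover have "0 < p" using q by simp
  ultimately have "x - x0 \<le> (c - d) / p" by (simp add: pos_le_divide_eq)
  then show ?thesis by simp
qed

lemma tendsto_gdagger_gamma_min:
  assumes fin: "\<And>p. 0 < p \<Longrightarrow> gdagger g p \<noteq> \<infinity>"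
  shows "(gdagger g \<longlongrightarrow> gamma_min g) at_top"
proof (rule order_tendstoI)
  fix a assume "a < gamma_min g"
  then show "\<forall>\<^sub>F p in at_top. a < gdagger g p"
    by (intro always_eventually allI less_le_trans[OF _ gamma_min_le_gdagger])
next
  fix a assume "gamma_min g < a"
  then obtain x0 where x0: "- \<infinity> < g x0" "ereal x0 < a"
    unfolding gamma_min_def by (auto simp: Inf_less_iff)
  obtain x' where x': "1 \<in> superdiff g x'"
    using ex_superdiff_if_gdagger_finite fin[of 1] by auto
  obtain c where c: "g x' = ereal c" using superdiff_finite_value[OF x'] by blast
  have "g x0 \<noteq> \<infinity>" using superdiffD[OF x', of x0] c by auto
  with x0 obtain d where d: "g x0 = ereal d" by (cases "g x0") auto
  have "((\<lambda>p. ereal (x0 + (c - d) / p)) \<longlongrightarrow> ereal (x0 + 0)) at_top"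
    by (intro tendsto_ereal tendsto_add tendsto_const tendsto_divide_0[OF tendsto_const]
        filterlim_at_top_imp_at_infinity filterlim_ident)
  from order_tendstoD(2)[OF this] have "\<forall>\<^sub>F p in at_top. ereal (x0 + (c - d) / p) < a"
    using x0(2) by simp
  then show "\<forall>\<^sub>F p in at_top. gdagger g p < a"
    using eventually_gt_at_top[of 1]
  proof eventually_elim
    case (elim p)
    then obtain x where x: "p \<in> superdiff g x"
      using ex_superdiff_if_gdagger_finite fin[of p] by auto
    have "gdagger g p \<le> ereal x" by (rule gdagger_le[OF x])
    also have "\<dots> \<le> ereal (x0 + (c - d) / p)"
      using superdiff_point_le[OF x x' _ _ c d] elim by simp
    finally show ?case using elim by simp
  qed
qed

section \<open>Integrals over the unit interval\<close>

lemma set_integrable_mult_compose_bounded: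
  fixes q g :: "real \<Rightarrow> real"
  assumes q: "set_integrable lborel I q"
    and g: "g \<in> borel_measurable borel" "\<And>p. \<bar>g p\<bar> \<le> B"
  shows "set_integrable lborel I (\<lambda>y. q y * g (c * q y))"
  unfolding set_integrable_def
proof (rule Bochner_Integration.integrable_bound)
  have q': "integrable lborel (\<lambda>y. indicator I y *\<^sub>R q y)"
    using q unfolding set_integrable_def .
  then show "integrable lborel (\<lambda>y. B * norm (indicator I y *\<^sub>R q y))" by simp
  have "(\<lambda>y. indicator I y *\<^sub>R (q y * g (c * q y)))
      = (\<lambda>y. (indicator I y *\<^sub>R q y) * g (c * (indicator I y *\<^sub>R q y)))"
    by (simp add: indicator_def fun_eq_iff)
  moreover have "(\<lambda>y. (indicator I y *\<^sub>R q y) * g (c * (indicator I y *\<^sub>R q y))) \<in> borel_measurable lborel"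
    using borel_measurable_integrable[OF q'] g(1) by measurable
  ultimately show "(\<lambda>y. indicator I y *\<^sub>R (q y * g (c * q y))) \<in> borel_measurable lborel"
    by simp
  show "AE y in lborel. norm (indicator I y *\<^sub>R (q y * g (c * q y)))
      \<le> norm (B * norm (indicator I y *\<^sub>R q y))"
  proof (rule AE_I2)
    fix y
    have "\<bar>q y\<bar> * \<bar>g (c * q y)\<bar> \<le> \<bar>q y\<bar> * \<bar>B\<bar>"
      using g(2)[of "c * q y"] by (intro mult_left_mono) auto
    then show "norm (indicator I y *\<^sub>R (q y * g (c * q y))) \<le> norm (B * norm (indicator I y *\<^sub>R q y))"
      by (cases "y \<in> I") (simp_all add: abs_mult mult.commute)
  qed
qed

lemma tendsto_set_integral_mult_compose:
  fixes q g :: "real \<Rightarrow> real"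
  assumes q: "set_integrable lborel I q" "\<And>y. y \<in> I \<Longrightarrow> 0 < q y"
    and g: "g \<in> borel_measurable borel" "\<And>p. \<bar>g p\<bar> \<le> B" "\<forall>\<^sub>F p in at_top. g p = c"
  shows "((\<lambda>\<eta>. LINT y:I|lborel. q y * g (\<eta> * q y)) \<longlongrightarrow> (LINT y:I|lborel. q y) * c) at_top"
proof -
  have q': "integrable lborel (\<lambda>y. indicator I y *\<^sub>R q y)"
    using q(1) unfolding set_integrable_def .
  have "((\<lambda>\<eta>. LINT y|lborel. indicator I y *\<^sub>R (q y * g (\<eta> * q y)))
      \<longlongrightarrow> LINT y|lborel. (indicator I y *\<^sub>R q y) * c) at_top"
  proof (rule integral_dominated_convergence_at_top[where w="\<lambda>y. B * norm (indicator I y *\<^sub>R q y)"])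
    show "(\<lambda>y. indicator I y *\<^sub>R (q y * g (\<eta> * q y))) \<in> borel_measurable lborel" for \<eta>
      using set_integrable_mult_compose_bounded[OF q(1) g(1,2), of \<eta>]
      unfolding set_integrable_def by (rule borel_measurable_integrable)
    show "AE y in lborel. ((\<lambda>\<eta>. indicator I y *\<^sub>R (q y * g (\<eta> * q y))) \<longlongrightarrow> (indicator I y *\<^sub>R q y) * c) at_top"
    proof (rule AE_I2)
      fix y
      show "((\<lambda>\<eta>. indicator I y *\<^sub>R (q y * g (\<eta> * q y))) \<longlongrightarrow> (indicator I y *\<^sub>R q y) * c) at_top"
      proof (cases "y \<in> I")
        case True
        have "filterlim (\<lambda>\<eta>. \<eta> * q y) at_top at_top"
          using filterlim_tendsto_pos_mult_at_top[OF tendsto_const q(2)[OF True] filterlim_ident]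
          by (simp add: mult.commute)
        from filterlim_iff[THEN iffD1, OF this, rule_format, OF g(3)]
        have "\<forall>\<^sub>F \<eta> in at_top. g (\<eta> * q y) = c" .
        then show ?thesis using True by (auto elim!: eventually_mono intro: tendsto_eventually)
      qed simp
    qed
    show "\<forall>\<^sub>F \<eta> in at_top. AE y in lborel. norm (indicator I y *\<^sub>R (q y * g (\<eta> * q y)))
        \<le> B * norm (indicator I y *\<^sub>R q y)"
    proof (intro always_eventually allI AE_I2)
      fix \<eta> y
      have "\<bar>q y\<bar> * \<bar>g (\<eta> * q y)\<bar> \<le> \<bar>q y\<bar> * B" using g(2) by (intro mult_left_mono) auto
      then show "norm (indicator I y *\<^sub>R (q y * g (\<eta> * q y))) \<le> B * norm (indicator I y *\<^sub>R q y)"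
        by (cases "y \<in> I") (simp_all add: abs_mult mult.commute)
    qed
    show "(\<lambda>y. (indicator I y *\<^sub>R q y) * c) \<in> borel_measurable lborel"
      using borel_measurable_integrable[OF q'] by measurable
    show "integrable lborel (\<lambda>y. B * norm (indicator I y *\<^sub>R q y))"
      using q' by simp
  qed
  then show ?thesis by (simp add: set_lebesgue_integral_def)
qed

lemma integral_Icc_eq_set_integral_Ioo:
  fixes F f :: "real \<Rightarrow> real"
  assumes "set_integrable lborel {a<..<b} f" "\<And>y. y \<in> {a<..<b} \<Longrightarrow> F y = f y"
  shows "integral {a..b} F = (LINT y:{a<..<b}|lborel. f y)"
proof -
  have "integral {a..b} F = integral {a<..<b} F"
    by (rule integral_spike_set; rule negligible_subset[of "{a, b}"]) auto
  also have "\<dots> = integral {a<..<b} f" by (rule integral_cong) (simp add: assms(2))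
  also have "\<dots> = (LINT y:{a<..<b}|lborel. f y)"
    using set_borel_integral_eq_integral(2)[OF assms(1)] by simp
  finally show ?thesis .
qed

lemma integral_unit_interval_bounds:
  fixes f :: "real \<Rightarrow> real"
  assumes "\<And>x. x \<in> {0..1} \<Longrightarrow> m \<le> f x" "\<And>x. x \<in> {0..1} \<Longrightarrow> f x \<le> M"
    and "m \<le> 0" "0 \<le> M"
  shows "m \<le> integral {0..1} f \<and> integral {0..1} f \<le> M"
proof (cases "f integrable_on {0..1}")
  case True
  have "integral {0..1} (\<lambda>x::real. m) \<le> integral {0..1} f"
    by (intro integral_le True) (use assms(1) in auto)
  moreover have "integral {0..1} f \<le> integral {0..1} (\<lambda>x::real. M)"
    by (intro integral_le True) (use assms(2) in auto)
  ultimately show ?thesis by simp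
next
  case False
  then show ?thesis using assms(3,4) by (simp add: not_integrable_integral)
qed

section \<open>Piecewise linear utility\<close>

lemma affine_interpolation_le_max:
  fixes f :: "real \<Rightarrow> real"
  assumes "a < b" "a \<le> y" "y \<le> b" and f: "f y = f a + (f b - f a) / (b - a) * (y - a)"
  shows "f y - p * y \<le> max (f a - p * a) (f b - p * b)"
proof -
  define t where "t = (y - a) / (b - a)"
  have t: "0 \<le> t" "t \<le> 1" using assms(1-3) by (auto simp: t_def field_simps)
  have fy: "f y = f a + t * (f b - f a)"
    using assms(1) unfolding f t_def by (simp add: field_simps)
  have y: "y = a + t * (b - a)" using assms(1) by (simp add: t_def)
  have py: "p * y = (1 - t) * (p * a) + t * (p * b)" by (subst y) (simp add: algebra_simps)
  have "f y - p * y = (1 - t) * (f a - p * a) + t * (f b - p * b)"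
    unfolding fy py by (simp add: algebra_simps)
  also have "\<dots> \<le> (1 - t) * max (f a - p * a) (f b - p * b) + t * max (f a - p * a) (f b - p * b)"
    using t by (intro add_mono mult_left_mono) auto
  finally show ?thesis by (simp add: algebra_simps)
qed

locale piecewise_linear_utility =
  fixes v :: "real \<Rightarrow> ereal" and w :: "real \<Rightarrow> real" and xg :: "nat \<Rightarrow> real" and N :: nat
  assumes N: "1 \<le> N"
    and grid: "\<And>i j. 1 \<le> i \<Longrightarrow> i < j \<Longrightarrow> j \<le> N \<Longrightarrow> xg i < xg j"
    and v_def: "\<And>x. v x = (if x < xg 1 then -\<infinity> else ereal (w x))"
    and w_lin: "\<And>i x. 1 \<le> i \<Longrightarrow> i < N \<Longrightarrow> x \<in> {xg i..xg (Suc i)} \<Longrightarrow>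
                 w x = w (xg i) + (w (xg (Suc i)) - w (xg i)) / (xg (Suc i) - xg i) * (x - xg i)"
    and w_const: "\<And>x. x \<ge> xg N \<Longrightarrow> w x = w (xg N)"
    and w_mono: "mono_on {xg 1..} w"
    and w_nonpos: "\<And>x. x \<ge> xg 1 \<Longrightarrow> w x \<le> 0"
begin

lemma grid_bounds: "i \<in> {1..N} \<Longrightarrow> xg 1 \<le> xg i \<and> xg i \<le> xg N"
  using grid[of 1 i] grid[of i N] by (cases "i = 1"; cases "i = N") auto

lemma grid_segment:
  assumes "xg 1 \<le> y" "y < xg N"
  obtains i where "1 \<le> i" "i < N" "xg i \<le> y" "y \<le> xg (Suc i)"
proof -
  define I where "I = {i \<in> {1..N}. xg i \<le> y}"
  have I: "finite I" "1 \<in> I" using assms N unfolding I_def by auto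
  define i where "i = Max I"
  have "i \<in> I" using Max_in[OF I(1)] I(2) unfolding i_def by blast
  then have i: "1 \<le> i" "i < N" "xg i \<le> y" using assms(2) unfolding I_def by (auto simp: le_less)
  have "y \<le> xg (Suc i)"
  proof (rule ccontr)
    assume "\<not> y \<le> xg (Suc i)"
    then have "Suc i \<in> I" using i unfolding I_def by auto
    then show False using Max_ge[OF I(1), of "Suc i"] unfolding i_def[symmetric] by simp
  qed
  with i that show ?thesis by blast
qed

lemma grid_maximizes:
  assumes "0 \<le> p" "xg 1 \<le> y"
  shows "\<exists>i\<in>{1..N}. w y - p * y \<le> w (xg i) - p * xg i"
proof (cases "y < xg N")
  case True
  then obtain i where i: "1 \<le> i" "i < N" "xg i \<le> y" "y \<le> xg (Suc i)"
    using grid_segment assms(2) by blast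
  have "w y - p * y \<le> max (w (xg i) - p * xg i) (w (xg (Suc i)) - p * xg (Suc i))"
    using i grid[of i "Suc i"] w_lin[of i y] by (intro affine_interpolation_le_max) auto
  then consider "w y - p * y \<le> w (xg i) - p * xg i" | "w y - p * y \<le> w (xg (Suc i)) - p * xg (Suc i)"
    by linarith
  then show ?thesis
  proof cases
    case 1 with i show ?thesis by (intro bexI[of _ i]) auto
  next
    case 2 with i show ?thesis by (intro bexI[of _ "Suc i"]) auto
  qed
next
  case False
  then have "p * xg N \<le> p * y" using assms(1) by (intro mult_left_mono) auto
  with False have "w y - p * y \<le> w (xg N) - p * xg N" using w_const[of y] by simp
  then show ?thesis using N by (intro bexI[of _ N]) auto
qed

lemma superdiff_at_grid:
  assumes "0 \<le> p" "k \<in> {1..N}"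
    and k_max: "\<And>i. i \<in> {1..N} \<Longrightarrow> w (xg i) - p * xg i \<le> w (xg k) - p * xg k"
  shows "p \<in> superdiff v (xg k)"
  unfolding superdiff_def
proof (intro CollectI conjI allI)
  have k: "xg 1 \<le> xg k" using grid_bounds[OF assms(2)] by simp
  then show "\<bar>v (xg k)\<bar> \<noteq> \<infinity>" by (simp add: v_def)
  show "v y \<le> v (xg k) + ereal (p * (y - xg k))" for y
  proof (cases "y < xg 1")
    case False
    then obtain i where i: "i \<in> {1..N}" "w y - p * y \<le> w (xg i) - p * xg i"
      using grid_maximizes assms(1) by (meson not_less)
    have "w y \<le> w (xg k) + (p * y - p * xg k)" using k_max[OF i(1)] i(2) by linarith
    then have "w y \<le> w (xg k) + p * (y - xg k)" by (simp add: right_diff_distrib)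
    then show ?thesis using False k by (simp add: v_def)
  qed (simp add: v_def)
qed

lemma ex_superdiff_at_grid:
  assumes "0 \<le> p"
  obtains k where "k \<in> {1..N}" "p \<in> superdiff v (xg k)"
proof -
  have "\<exists>k. is_arg_min (\<lambda>i. p * xg i - w (xg i)) (\<lambda>i. i \<in> {1..N}) k"
    using N by (intro ex_is_arg_min_if_finite) auto
  then obtain k where k: "k \<in> {1..N}"
    and k_min: "\<And>i. i \<in> {1..N} \<Longrightarrow> p * xg k - w (xg k) \<le> p * xg i - w (xg i)"
    unfolding is_arg_min_linorder by blast
  have "w (xg i) - p * xg i \<le> w (xg k) - p * xg k" if "i \<in> {1..N}" for i
    using k_min[OF that] by linarith
  then have "p \<in> superdiff v (xg k)" by (rule superdiff_at_grid[OF assms k])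
  then show ?thesis by (rule that[OF k])
qed

lemma superdiff_point_bounds:
  assumes "0 < p" "p \<in> superdiff v x"
  shows "xg 1 \<le> x" "x \<le> xg N"
proof -
  show x: "xg 1 \<le> x"
  proof (rule ccontr)
    assume "\<not> xg 1 \<le> x"
    then show False using superdiff_finite_value[OF assms(2)] by (simp add: v_def)
  qed
  show "x \<le> xg N"
  proof (rule ccontr)
    assume "\<not> x \<le> xg N"
    moreover have "v (xg N) \<le> v x + ereal (p * (xg N - x))" by (rule superdiffD[OF assms(2)])
    ultimately have "w (xg N) \<le> w (xg N) + p * (xg N - x)"
      using x grid_bounds[of N] N w_const[of x] by (simp add: v_def)
    with \<open>\<not> x \<le> xg N\<close> assms(1) show False by (simp add: zero_le_mult_iff)
  qed
qed

lemma gdagger_v_range: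
  assumes "0 < p"
  shows "ereal (xg 1) \<le> gdagger v p" "gdagger v p \<le> ereal (xg N)"
proof -
  obtain k where k: "k \<in> {1..N}" "p \<in> superdiff v (xg k)"
    using ex_superdiff_at_grid assms by (metis less_imp_le)
  show "gdagger v p \<le> ereal (xg N)"
    using gdagger_le[OF k(2)] grid_bounds[OF k(1)] by (auto intro: order_trans)
  show "ereal (xg 1) \<le> gdagger v p"
    unfolding gdagger_def
  proof (rule Inf_greatest)
    fix z assume "z \<in> ereal ` {x. p \<in> superdiff v x}"
    then show "ereal (xg 1) \<le> z" using superdiff_point_bounds(1)[OF assms] by auto
  qed
qed

lemma gdagger_v_eventually_xg1: "\<forall>\<^sub>F p in at_top. gdagger v p = ereal (xg 1)"
proof -
  define L where "L = (\<Sum>i\<in>{1..N}. \<bar>w (xg i) - w (xg 1)\<bar> / (xg i - xg 1))"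
  have slope_le_L: "\<bar>w (xg i) - w (xg 1)\<bar> / (xg i - xg 1) \<le> L" if "i \<in> {1..N}" for i
    unfolding L_def using that grid_bounds by (intro member_le_sum) auto
  show ?thesis
    using eventually_gt_at_top[of "max 0 L"]
  proof eventually_elim
    case (elim p)
    have "w (xg i) - p * xg i \<le> w (xg 1) - p * xg 1" if i: "i \<in> {1..N}" for i
    proof (cases "i = 1")
      case False
      then have "0 < xg i - xg 1" using grid[of 1 i] i by auto
      with slope_le_L[OF i] have "\<bar>w (xg i) - w (xg 1)\<bar> \<le> L * (xg i - xg 1)"
        by (simp add: divide_le_eq)
      also have "\<dots> \<le> p * (xg i - xg 1)"
        using elim \<open>0 < xg i - xg 1\<close> by (intro mult_right_mono) auto
      finally have "\<bar>w (xg i) - w (xg 1)\<bar> \<le> p * (xg i - xg 1)" .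
      then show ?thesis by (simp add: algebra_simps)
    qed simp
    then have "p \<in> superdiff v (xg 1)" using N elim by (intro superdiff_at_grid) auto
    then show ?case using gdagger_le gdagger_v_range[of p] elim by (auto intro: antisym)
  qed
qed

lemma v_bounds: "min 0 (1 + w (xg 1)) \<le> 1 + real_of_ereal (v y)" "1 + real_of_ereal (v y) \<le> 1"
proof -
  have "w (xg 1) \<le> w y \<and> w y \<le> 0" if "xg 1 \<le> y"
    using that w_mono w_nonpos[of y] by (auto simp: mono_on_def)
  then show "min 0 (1 + w (xg 1)) \<le> 1 + real_of_ereal (v y)" "1 + real_of_ereal (v y) \<le> 1"
    by (auto simp: v_def)
qed

text \<open>Extended by \<open>xg N\<close> to \<open>p \<le> 0\<close> so that it is antitone, hence Borel measurable.\<close>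
definition v_dagger :: "real \<Rightarrow> real" where
  "v_dagger p = (if 0 < p then real_of_ereal (gdagger v p) else xg N)"

lemma gdagger_v_eq: "0 < p \<Longrightarrow> gdagger v p = ereal (v_dagger p)"
  using gdagger_v_range[of p] by (cases "gdagger v p") (auto simp: v_dagger_def)

lemma v_dagger_bounds: "xg 1 \<le> v_dagger p \<and> v_dagger p \<le> xg N"
proof (cases "0 < p")
  case True
  then show ?thesis using gdagger_v_range[OF True] by (simp add: gdagger_v_eq[OF True])
next
  case False
  then show ?thesis using grid_bounds[of N] N by (simp add: v_dagger_def)
qed

lemma antimono_v_dagger: "antimono v_dagger"
proof (rule antimonoI)
  fix p p' :: real assume "p \<le> p'"
  show "v_dagger p' \<le> v_dagger p"
  proof (cases "0 < p \<and> p < p'")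
    case True
    then have "0 \<le> p'" by simp
    then obtain k where "p' \<in> superdiff v (xg k)" by (rule ex_superdiff_at_grid)
    with True have "gdagger v p' \<le> gdagger v p" by (intro gdagger_antimono) auto
    with True show ?thesis by (simp add: gdagger_v_eq)
  next
    case False
    with \<open>p \<le> p'\<close> consider "p \<le> 0" | "p = p'" by linarith
    then show ?thesis
    proof cases
      case 1
      then show ?thesis using v_dagger_bounds[of p'] by (simp add: v_dagger_def)
    qed simp
  qed
qed

lemma borel_measurable_v_dagger: "v_dagger \<in> borel_measurable borel"
proof -
  have "mono (\<lambda>p. - v_dagger p)" by (intro monoI) (simp add: antimonoD[OF antimono_v_dagger])
  then have "(\<lambda>p. - (- v_dagger p)) \<in> borel_measurable borel"
    by (intro borel_measurable_uminus borel_measurable_mono)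
  then show ?thesis by simp
qed

lemma v_dagger_eventually_xg1: "\<forall>\<^sub>F p in at_top. v_dagger p = xg 1"
  using gdagger_v_eventually_xg1 eventually_gt_at_top[of 0]
  by eventually_elim (simp add: gdagger_v_eq)

lemma tendsto_integral_qBS_gdagger_v:
  assumes K: "0 < K"
  shows "((\<lambda>\<eta>. integral {0..1} (\<lambda>x. e * qBS M x * real_of_ereal (gdagger v (\<eta> * K * qBS M x))))
           \<longlongrightarrow> e * xg 1) at_top"
proof -
  define g where "g p = v_dagger (K * p)" for p
  have g_bounded: "\<bar>g p\<bar> \<le> \<bar>xg 1\<bar> + \<bar>xg N\<bar>" for p
    unfolding g_def abs_le_iff using v_dagger_bounds[of "K * p"] by linarith
  have g_meas: "g \<in> borel_measurable borel"
    unfolding g_def[abs_def] by (rule measurable_compose[OF _ borel_measurable_v_dagger]) simp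
  have "filterlim (\<lambda>p. K * p) at_top at_top"
    by (rule filterlim_tendsto_pos_mult_at_top[OF tendsto_const K filterlim_ident])
  from filterlim_iff[THEN iffD1, OF this, rule_format, OF v_dagger_eventually_xg1]
  have g_eventually: "\<forall>\<^sub>F p in at_top. g p = xg 1" by (simp add: g_def)
  define I :: "real set" where "I = {0<..<1}"
  have lim: "((\<lambda>\<eta>. e * (LINT y:I|lborel. q_normal M y * g (\<eta> * q_normal M y))) \<longlongrightarrow> e * xg 1) at_top"
    using tendsto_set_integral_mult_compose[OF set_integrable_q_normal q_normal_pos g_meas g_bounded g_eventually]
    by (intro tendsto_mult_left) (simp add: I_def set_integral_q_normal)
  have "\<forall>\<^sub>F \<eta> in at_top.
      e * (LINT y:I|lborel. q_normal M y * g (\<eta> * q_normal M y))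
      = integral {0..1} (\<lambda>x. e * qBS M x * real_of_ereal (gdagger v (\<eta> * K * qBS M x)))"
    using eventually_gt_at_top[of 0]
  proof eventually_elim
    case (elim \<eta>)
    have "0 < \<eta> * K * q_normal M y" for y using elim K q_normal_pos[of M y] by simp
    then show ?case
      using set_integrable_mult_compose_bounded[OF set_integrable_q_normal g_meas g_bounded, of M \<eta>]
      by (subst integral_Icc_eq_set_integral_Ioo[where f="\<lambda>y. e * (q_normal M y * g (\<eta> * q_normal M y))"])
        (auto simp: I_def qBS_eq_q_normal gdagger_v_eq g_def mult.assoc mult.left_commute)
  qed
  then show ?thesis using lim by (rule tendsto_cong[THEN iffD1])
qed

end

section \<open>The limit of \<open>X\<^sup>\<eta>\<close>\<close>

lemma filterlim_scaled_inverse_at_top: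
  fixes J :: "real \<Rightarrow> real"
  assumes "0 < dt" "0 < s" "s < 1" and J: "\<And>\<eta>. m \<le> J \<eta> \<and> J \<eta> \<le> 1"
  shows "filterlim (\<lambda>\<eta>. - (\<eta> / dt) * inverse (- 1 + s * J \<eta>)) at_top at_top"
proof (rule filterlim_at_top_mono)
  define E where "E = dt * (1 - s * m)"
  have "s * m \<le> s * 1" using J[of 0] assms(2) by (intro mult_left_mono) auto
  then have "0 < E" using assms(1,3) by (simp add: E_def)
  show "filterlim (\<lambda>\<eta>. inverse E * \<eta>) at_top at_top"
    using \<open>0 < E\<close> by (intro filterlim_tendsto_pos_mult_at_top[OF tendsto_const _ filterlim_ident]) simp
  show "\<forall>\<^sub>F \<eta> in at_top. inverse E * \<eta> \<le> - (\<eta> / dt) * inverse (- 1 + s * J \<eta>)"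
    using eventually_ge_at_top[of 0]
  proof eventually_elim
    case (elim \<eta>)
    have "s * J \<eta> \<le> s * 1" "s * m \<le> s * J \<eta>" using J[of \<eta>] assms(2) by (auto intro: mult_left_mono)
    then have "0 < dt * (1 - s * J \<eta>)" "dt * (1 - s * J \<eta>) \<le> E"
      using assms(1,3) by (auto simp: E_def)
    then have "\<eta> / E \<le> \<eta> / (dt * (1 - s * J \<eta>))" using elim by (intro divide_left_mono) auto
    also have "\<dots> = - (\<eta> / dt) * inverse (- (1 - s * J \<eta>))"
      by (simp only: inverse_minus_eq divide_inverse inverse_mult_distrib) simp
    finally show ?case by (simp add: divide_inverse mult.commute)
  qed
qed

theorem mainTheorem11:
  fixes u v :: "real \<Rightarrow> ereal" and w :: "real \<Rightarrow> real" and xg :: "nat \<Rightarrow> real"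
    and N C :: nat and s \<mu> r \<sigma> dt :: real
  assumes N: "1 \<le> N"
    and grid: "\<And>i j. 1 \<le> i \<Longrightarrow> i < j \<Longrightarrow> j \<le> N \<Longrightarrow> xg i < xg j"
    and v_def: "\<And>x. v x = (if x < xg 1 then -\<infinity> else ereal (w x))"
    and w_lin: "\<And>i x. 1 \<le> i \<Longrightarrow> i < N \<Longrightarrow> x \<in> {xg i..xg (Suc i)} \<Longrightarrow>
                 w x = w (xg i) + (w (xg (Suc i)) - w (xg i)) / (xg (Suc i) - xg i) * (x - xg i)"
    and w_const: "\<And>x. x \<ge> xg N \<Longrightarrow> w x = w (xg N)"
    and w_concave: "concave_on {xg 1..} w"
    and w_mono: "mono_on {xg 1..} w"
    and w_nonpos: "\<And>x. x \<ge> xg 1 \<Longrightarrow> w x \<le> 0"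
    and u_fin: "\<And>x. u x \<noteq> \<infinity>"
    and u_concave: "econcave u"
    and u_mono: "mono u"
    and udag_fin: "\<And>p. p > 0 \<Longrightarrow> \<bar>gdagger u p\<bar> \<noteq> \<infinity>"
    and udag_cont: "continuous_on {0<..} (\<lambda>p. real_of_ereal (gdagger u p))"
    and udag_lim: "(gdagger u \<longlongrightarrow> \<infinity>) (at_right 0)"
    and s: "0 < s" "s < 1"
    and C: "C \<in> {0, 1}"
    and \<sigma>: "\<sigma> > 0" and dt: "dt > 0"
  shows "((\<lambda>\<eta>. X_eta u v s C r dt (Mpar \<mu> r \<sigma> dt) \<eta>) \<longlongrightarrow>
            gamma_min u + ereal (s ^ C * exp (- r * dt) * xg 1)) at_top"
proof -
  interpret piecewise_linear_utility v w xg N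
    by unfold_locales (fact N grid v_def w_lin w_const w_mono w_nonpos)+
  define M where "M = Mpar \<mu> r \<sigma> dt"
  define K where "K = s powr (real C - 1) * exp (- r * dt)"
  have "0 < K" using s by (simp add: K_def)
  from tendsto_integral_qBS_gdagger_v[OF this, of "exp (- r * dt)" M]
  have "((\<lambda>\<eta>. integral {0..1} (\<lambda>x. exp (- r * dt) * qBS M x * f_eta v s C r dt M \<eta> x))
      \<longlongrightarrow> exp (- r * dt) * xg 1) at_top"
    by (simp add: f_eta_def K_def mult.assoc)
  then have "((\<lambda>\<eta>. ereal (s ^ C * integral {0..1} (\<lambda>x. exp (- r * dt) * qBS M x * f_eta v s C r dt M \<eta> x)))
      \<longlongrightarrow> ereal (s ^ C * exp (- r * dt) * xg 1)) at_top"
    unfolding mult.assoc[of "s ^ C"] by (intro tendsto_ereal tendsto_mult_left)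
  moreover
  define J where "J \<eta> = integral {0..1} (\<lambda>x. 1 + real_of_ereal (v (f_eta v s C r dt M \<eta> x)))" for \<eta>
  have "min 0 (1 + w (xg 1)) \<le> J \<eta> \<and> J \<eta> \<le> 1" for \<eta>
    unfolding J_def by (intro integral_unit_interval_bounds v_bounds) auto
  then have "filterlim (\<lambda>\<eta>. - (\<eta> / dt) * inverse (- 1 + s * J \<eta>)) at_top at_top"
    by (intro filterlim_scaled_inverse_at_top dt s)
  from filterlim_compose[OF tendsto_gdagger_gamma_min this] udag_fin
  have "((\<lambda>\<eta>. gamma_eta u v s C r dt M \<eta>) \<longlongrightarrow> gamma_min u) at_top"
    unfolding gamma_eta_def J_def by force
  ultimately show ?thesis
    unfolding X_eta_def M_def[symmetric] by (intro tendsto_add_ereal_general1) auto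
qed

end
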